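(* Let $w_1,w_2\ge2$ be even. The map $\psi:V_{w_1,w_2}^{\mathbb Q}[I_D]\to W_{w_1+w_2}^{\mathbb Q}$, $P(X_1,X_2)\mapsto P(Z,Z)$, is well defined and surjective, and it admits a rational section: if $P(Z)=\sum_{m=0}^{w_1+w_2}\binom{w_1+w_2}{m}a_m(-Z)^{w_1+w_2-m}\in W_{w_1+w_2}^{\mathbb Q}$, then $Q(X_1,X_2)=\sum_{m_1=0}^{w_1}\sum_{m_2=0}^{w_2}\binom{w_1}{m_1}\binom{w_2}{m_2}a_{m_1+m_2}(-X_1)^{w_1-m_1}(-X_2)^{w_2-m_2}$ lies in $V_{w_1,w_2}^{\mathbb Q}[I_D]$ and satisfies $Q(Z,Z)=P(Z)$.
   Context: $\Gamma=PSL_2(\mathbb Z)$, $S=\pm\begin{pmatrix}0&-1\\1&0\end{pmatrix}$, $U=\pm\begin{pmatrix}0&1\\-1&1\end{pmatrix}$. For even $w$, $V_w^{\mathbb Q}$ is the space of rational polynomials of degree $\le w$ with action $\gamma.P(X)=(-cX+a)^wP\big(\frac{dX-b}{-cX+a}\big)$ for $\gamma=\pm\begin{pmatrix}a&b\\c&d\end{pmatrix}$; $W_w^{\mathbb Q}=\{P\in V_w^{\mathbb Q}:(1+S).P=(1+U+U^2).P=0\}$. $V_{w_1,w_2}^{\mathbb Q}$ is the space of rational polynomials in $X_1,X_2$ with $\deg_{X_j}\le w_j$, with action $(\gamma_1,\gamma_2).P(X_1,X_2)=(-c_1X_1+a_1)^{w_1}(-c_2X_2+a_2)^{w_2}P\big(\frac{d_1X_1-b_1}{-c_1X_1+a_1},\frac{d_2X_2-b_2}{-c_2X_2+a_2}\big)$,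 extended linearly to $\mathbb Z[\Gamma^2]$; $V_{w_1,w_2}^{\mathbb Q}[I_D]=\{P\in V_{w_1,w_2}^{\mathbb Q}:[(1,1)+(S,S)].P=[(1,1)+(U,U)+(U^2,U^2)].P=0\}$. *)

theory Defs
  imports "HOL-Computational_Algebra.Polynomial"
begin

text \<open>Elements of PSL_2(Z) are represented by integer matrices (a,b,c,d) (a representative
of the class +-M); since the weights are even the action does not depend on the sign.\<close>

type_synonym mat2 = "int \<times> int \<times> int \<times> int"

definition mat2_mult :: "mat2 \<Rightarrow> mat2 \<Rightarrow> mat2" where
  "mat2_mult M N = (case M of (a,b,c,d) \<Rightarrow> case N of (a',b',c',d') \<Rightarrow>
     (a*a' + b*c', a*b' + b*d', c*a' + d*c', c*b' + d*d'))"

definition S_mat :: mat2 where "S_mat = (0, -1, 1, 0)"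
definition U_mat :: mat2 where "U_mat = (0, 1, -1, 1)"
definition U2_mat :: mat2 where "U2_mat = mat2_mult U_mat U_mat"

definition numer :: "mat2 \<Rightarrow> rat poly" where
  "numer g = (case g of (a,b,c,d) \<Rightarrow> [:- of_int b, of_int d:])"
definition denom :: "mat2 \<Rightarrow> rat poly" where
  "denom g = (case g of (a,b,c,d) \<Rightarrow> [:of_int a, - of_int c:])"

text \<open>One-variable space V_w: rational polynomials of degree at most w, and the action
  g.P(X) = (-cX+a)^w P((dX-b)/(-cX+a)).\<close>
definition V1 :: "nat \<Rightarrow> rat poly set" where
  "V1 w = {P. degree P \<le> w}"

definition act1 :: "nat \<Rightarrow> mat2 \<Rightarrow> rat poly \<Rightarrow> rat poly" where
  "act1 w g P = (\<Sum>k\<le>w. smult (coeff P k) (numer g ^ k * denom g ^ (w - k)))"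

definition W1 :: "nat \<Rightarrow> rat poly set" where
  "W1 w = {P \<in> V1 w. P + act1 w S_mat P = 0 \<and>
                     P + act1 w U_mat P + act1 w U2_mat P = 0}"

text \<open>Two-variable polynomials: rat poly poly, outer variable X2, inner variable X1
  (coefficient of X1^i X2^j is coeff (coeff P j) i).\<close>
definition V2 :: "nat \<Rightarrow> nat \<Rightarrow> rat poly poly set" where
  "V2 w1 w2 = {P. degree P \<le> w2 \<and> (\<forall>j. degree (coeff P j) \<le> w1)}"

definition act2 :: "nat \<Rightarrow> nat \<Rightarrow> mat2 \<Rightarrow> mat2 \<Rightarrow> rat poly poly \<Rightarrow> rat poly poly" where
  "act2 w1 w2 g1 g2 P = (\<Sum>j\<le>w2. \<Sum>i\<le>w1.
      [: smult (coeff (coeff P j) i) (numer g1 ^ i * denom g1 ^ (w1 - i)) :] *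
      (map_poly (\<lambda>c. [:c:]) (numer g2 ^ j * denom g2 ^ (w2 - j))))"

definition V2_ID :: "nat \<Rightarrow> nat \<Rightarrow> rat poly poly set" where
  "V2_ID w1 w2 = {P \<in> V2 w1 w2. P + act2 w1 w2 S_mat S_mat P = 0 \<and>
      P + act2 w1 w2 U_mat U_mat P + act2 w1 w2 U2_mat U2_mat P = 0}"

definition diag :: "rat poly poly \<Rightarrow> rat poly" where
  "diag P = poly P [:0, 1:]"

end

theory Submission
  imports Defs
begin

text \<open>
  Write a polynomial of degree at most $n = w_1 + w_2$ as $P = \sum_m \binom{n}{m} a_m (-Z)^{n-m}$;
  the section $Q$ is the polarization of $P$. Both $P$ and $Q$ depend linearly on the sequence $a$,
  and for the power sequences $a_m = u^m v^{n-m}$ they are $(u - vZ)^n$ and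
  $(u - vX_1)^{w_1} (u - vX_2)^{w_2}$. An element $g$ of the group acts on such powers by the
  same linear substitution of $(u, v)$ in one and two variables, so polarization intertwines
  the action on $V_n$ with the diagonal action on $V_{w_1,w_2}$, and $Q(Z,Z) = P(Z)$. Since the
  sequences $(t^m)_{m \le n}$ span all sequences (a polynomial with infinitely many roots
  vanishes), these identities hold for every $a$. Hence $Q$ satisfies the relations of $I_D$
  whenever $P$ lies in $W_n$. Conversely the diagonal map intertwines the actions, which gives
  well-definedness of $\psi$; together with the section this proves surjectivity.
\<close>

lemma smult_sum_right: "smult c (\<Sum>i\<in>A. f i) = (\<Sum>i\<in>A. smult c (f i))"
  by (induct A rule: infinite_finite_induct) (auto simp: smult_add_right)

lemma linear_monom_power: "[:0, c:] ^ k = monom (c ^ k) k"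
proof -
  have "[:0, c:] = monom c 1" by (simp add: monom_Suc monom_0)
  then show ?thesis by (simp add: monom_power)
qed

lemma coeffs_eq_0_if_power_sums_eq_0:
  fixes c :: "nat \<Rightarrow> 'a::{idom, ring_char_0}"
  assumes "\<And>t. (\<Sum>k\<le>w. c k * t ^ k) = 0" and "k \<le> w"
  shows "c k = 0"
proof -
  have "poly (\<Sum>k\<le>w. monom (c k) k) t = 0" for t
    using assms(1) by (simp add: poly_sum poly_monom)
  then have "(\<Sum>k\<le>w. monom (c k) k) = 0"
    using poly_all_0_iff_0 by blast
  then show ?thesis
    using coeff_sum_monom[OF assms(2), of c] by simp
qed

lemma seq_eq_sum_unit_seqs:
  fixes a :: "nat \<Rightarrow> 'a::comm_semiring_1"
  shows "m \<le> n \<Longrightarrow> a m = (\<Sum>k\<le>n. a k * of_bool (m = k))"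
  by (simp add: of_bool_def if_distrib[of "times _"] sum.delta cong: if_cong)

lemma act1_smult: "act1 w g (smult c P) = smult c (act1 w g P)"
  by (simp add: act1_def smult_sum_right)

lemma act1_sum: "act1 w g (\<Sum>i\<in>A. f i) = (\<Sum>i\<in>A. act1 w g (f i))"
  by (simp add: act1_def coeff_sum smult_sum sum.swap[of _ A])

lemma act1_monom:
  "k \<le> w \<Longrightarrow> act1 w g (monom c k) = smult c (numer g ^ k * denom g ^ (w - k))"
  unfolding act1_def coeff_monom
  by (simp add: if_distrib[of "\<lambda>c. smult c _"] sum.delta cong: if_cong)

lemma act1_linear_power:
  "act1 n g ([:u, z:] ^ n) = (smult z (numer g) + smult u (denom g)) ^ n"
  unfolding binomial_ring act1_def
  by (intro sum.cong refl) (simp add: coeff_linear_poly_power smult_power of_nat_poly mult_ac)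

lemma act1_linear_power_mat2:
  "act1 n (a, b, c, d) ([:u, -v:] ^ n) =
     [:u * of_int a + v * of_int b, - (u * of_int c + v * of_int d):] ^ n"
proof -
  have "[:u * of_int a + v * of_int b, - (u * of_int c + v * of_int d):] =
      smult (-v) (numer (a, b, c, d)) + smult u (denom (a, b, c, d))"
    by (simp add: numer_def denom_def algebra_simps)
  then show ?thesis by (simp add: act1_linear_power)
qed

abbreviation poly_X2 :: "'a::comm_ring_1 poly \<Rightarrow> 'a poly poly" where
  "poly_X2 p \<equiv> map_poly (\<lambda>c. [:c:]) p"

lemma coeff_poly_X2 [simp]: "coeff (poly_X2 p) n = [:coeff p n:]"
  by (simp add: coeff_map_poly)

lemma poly_X2_pCons: "poly_X2 (pCons a p) = pCons [:a:] (poly_X2 p)"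
  by (rule map_poly_pCons) simp

lemma poly_X2_add: "poly_X2 (p + q) = poly_X2 p + poly_X2 q"
  by (rule poly_eqI) simp

lemma poly_X2_smult: "poly_X2 (smult c p) = smult [:c:] (poly_X2 p)"
  by (rule poly_eqI) simp

lemma poly_X2_sum: "poly_X2 (\<Sum>i\<in>A. f i) = (\<Sum>i\<in>A. poly_X2 (f i))"
  by (rule poly_eqI) (simp add: coeff_sum sum_to_poly)

lemma poly_X2_mult: "poly_X2 (p * q) = poly_X2 p * poly_X2 (q :: 'a::comm_ring_1 poly)"
  by (induct p) (simp_all add: poly_X2_add poly_X2_smult poly_X2_pCons)

lemma poly_X2_power: "poly_X2 (p ^ n) = poly_X2 (p :: 'a::comm_ring_1 poly) ^ n"
  by (induct n) (simp_all add: poly_X2_mult)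

lemma poly_X2_minus_X: "poly_X2 [:0, -1:] = [:0, -1:]"
  by (simp add: poly_X2_pCons one_pCons minus_pCons)

lemma poly_poly_X2_X: "poly (poly_X2 p) [:0, 1:] = p"
  by (induct p) (simp_all add: poly_X2_pCons)

lemma act2_add: "act2 w1 w2 g1 g2 (P + Q) = act2 w1 w2 g1 g2 P + act2 w1 w2 g1 g2 Q"
  by (simp add: act2_def sum.distrib smult_add_left algebra_simps)

lemma act2_smult: "act2 w1 w2 g1 g2 (smult [:c:] P) = smult [:c:] (act2 w1 w2 g1 g2 P)"
  by (simp add: act2_def smult_sum_right mult.commute)

lemma act2_sum: "act2 w1 w2 g1 g2 (\<Sum>i\<in>A. f i) = (\<Sum>i\<in>A. act2 w1 w2 g1 g2 (f i))"
  by (induct A rule: infinite_finite_induct) (simp_all add: act2_add act2_def[of _ _ _ _ 0])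

lemma act2_tensor:
  "act2 w1 w2 g1 g2 ([:F:] * poly_X2 G) = [:act1 w1 g1 F:] * poly_X2 (act1 w2 g2 G)"
  unfolding act1_def act2_def
  by (simp add: sum_to_poly[symmetric] poly_X2_sum poly_X2_smult sum_distrib_left sum_distrib_right
      smult_sum_right sum.swap[of _ "{..w2}"] mult_ac)

lemma V2_add: "P \<in> V2 w1 w2 \<Longrightarrow> Q \<in> V2 w1 w2 \<Longrightarrow> P + Q \<in> V2 w1 w2"
  unfolding V2_def by (auto intro: degree_add_le)

lemma V2_sum: "(\<And>i. i \<in> A \<Longrightarrow> f i \<in> V2 w1 w2) \<Longrightarrow> (\<Sum>i\<in>A. f i) \<in> V2 w1 w2"
  by (induct A rule: infinite_finite_induct) (auto simp: V2_add, simp_all add: V2_def)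

lemma tensor_in_V2:
  assumes "degree F \<le> w1" "degree G \<le> w2"
  shows "[:F:] * poly_X2 G \<in> V2 w1 w2"
proof -
  have "degree ([:F:] * poly_X2 G) \<le> w2"
    using assms(2) by (intro degree_le) (simp add: coeff_eq_0)
  moreover have "degree (coeff ([:F:] * poly_X2 G) j) \<le> w1" for j
    using assms(1) degree_smult_le[of "coeff G j" F] by simp
  ultimately show ?thesis
    by (simp add: V2_def)
qed

definition binomial_poly :: "nat \<Rightarrow> (nat \<Rightarrow> rat) \<Rightarrow> rat poly" where
  "binomial_poly n a = (\<Sum>m\<le>n. smult (of_nat (n choose m) * a m) ([:0, -1:] ^ (n - m)))"

definition binomial_coords :: "nat \<Rightarrow> rat poly \<Rightarrow> nat \<Rightarrow> rat" where
  "binomial_coords n P m = (-1) ^ (n - m) * coeff P (n - m) / of_nat (n choose m)"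

lemma coeff_binomial_poly:
  "coeff (binomial_poly n a) k = (if k \<le> n then of_nat (n choose k) * a (n - k) * (-1) ^ k else 0)"
proof -
  have "coeff (binomial_poly n a) k =
      (\<Sum>m\<le>n. if m = n - k \<and> k \<le> n then of_nat (n choose m) * a m * (-1) ^ (n - m) else 0)"
    unfolding binomial_poly_def coeff_sum linear_monom_power coeff_smult coeff_monom
    by (intro sum.cong refl) auto
  then show ?thesis
    by (cases "k \<le> n") (simp_all add: binomial_symmetric[symmetric])
qed

lemma binomial_coords_binomial_poly:
  "m \<le> n \<Longrightarrow> binomial_coords n (binomial_poly n a) m = a m"
  by (simp add: binomial_coords_def coeff_binomial_poly binomial_symmetric[symmetric]
      flip: power_add)

lemma binomial_poly_binomial_coords:
  assumes "degree P \<le> n"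
  shows "binomial_poly n (binomial_coords n P) = P"
proof (rule poly_eqI)
  fix k
  show "coeff (binomial_poly n (binomial_coords n P)) k = coeff P k"
    using assms
    by (cases "k \<le> n")
       (simp_all add: coeff_binomial_poly binomial_coords_def binomial_symmetric[symmetric]
          coeff_eq_0 flip: power_mult_distrib)
qed

lemma binomial_coords_add:
  "binomial_coords n (P + Q) = (\<lambda>m. binomial_coords n P m + binomial_coords n Q m)"
  by (simp add: fun_eq_iff binomial_coords_def add_divide_distrib algebra_simps)

lemma binomial_coords_linear:
  "binomial_coords n (\<Sum>k\<in>K. smult (c k) (P k)) = (\<lambda>m. \<Sum>k\<in>K. c k * binomial_coords n (P k) m)"
  by (simp add: fun_eq_iff binomial_coords_def coeff_sum sum_distrib_left sum_divide_distrib mult_ac)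

lemma binomial_poly_cong:
  "(\<And>m. m \<le> n \<Longrightarrow> a m = b m) \<Longrightarrow> binomial_poly n a = binomial_poly n b"
  unfolding binomial_poly_def by (intro sum.cong refl) auto

lemma binomial_poly_linear:
  "binomial_poly n (\<lambda>m. \<Sum>k\<in>K. c k * f k m) = (\<Sum>k\<in>K. smult (c k) (binomial_poly n (f k)))"
  unfolding binomial_poly_def
  by (simp add: sum_distrib_left smult_sum smult_sum_right mult_ac sum.swap[of _ K])

lemma binomial_poly_eq_sum_unit_seqs:
  "binomial_poly n a = (\<Sum>k\<le>n. smult (a k) (binomial_poly n (\<lambda>m. of_bool (m = k))))"
proof -
  have "binomial_poly n a = binomial_poly n (\<lambda>m. \<Sum>k\<le>n. a k * of_bool (m = k))"
    by (rule binomial_poly_cong) (rule seq_eq_sum_unit_seqs)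
  then show ?thesis
    by (simp only: binomial_poly_linear)
qed

definition polarization :: "nat \<Rightarrow> nat \<Rightarrow> (nat \<Rightarrow> rat) \<Rightarrow> rat poly poly" where
  "polarization w1 w2 a = (\<Sum>m1\<le>w1. \<Sum>m2\<le>w2.
     [: smult (of_nat (w1 choose m1) * of_nat (w2 choose m2) * a (m1 + m2))
              ([:0, -1:] ^ (w1 - m1)) :] * [:0, -1:] ^ (w2 - m2))"

lemma polarization_cong:
  "(\<And>m. m \<le> w1 + w2 \<Longrightarrow> a m = b m) \<Longrightarrow> polarization w1 w2 a = polarization w1 w2 b"
  unfolding polarization_def by (intro sum.cong refl) auto

lemma polarization_linear:
  "polarization w1 w2 (\<lambda>m. \<Sum>k\<in>K. c k * f k m) =
     (\<Sum>k\<in>K. smult [:c k:] (polarization w1 w2 (f k)))"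
  unfolding polarization_def
  by (simp add: sum_distrib_left sum_distrib_right smult_sum sum_to_poly[symmetric]
      smult_sum_right mult_ac sum.swap[of _ K])

lemma polarization_eq_sum_unit_seqs:
  "polarization w1 w2 a =
     (\<Sum>k\<le>w1 + w2. smult [:a k:] (polarization w1 w2 (\<lambda>m. of_bool (m = k))))"
proof -
  have "polarization w1 w2 a = polarization w1 w2 (\<lambda>m. \<Sum>k\<le>w1 + w2. a k * of_bool (m = k))"
    by (rule polarization_cong) (rule seq_eq_sum_unit_seqs)
  then show ?thesis
    by (simp only: polarization_linear)
qed

lemma polarization_in_V2: "polarization w1 w2 a \<in> V2 w1 w2"
proof -
  have "degree (smult c ([:0, -1:] ^ k) :: rat poly) \<le> k" for c k
    by (simp add: linear_monom_power smult_monom degree_monom_le)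
  then show ?thesis
    unfolding polarization_def poly_X2_minus_X[symmetric] poly_X2_power[symmetric]
    by (intro V2_sum tensor_in_V2) auto
qed

definition power_seq :: "nat \<Rightarrow> rat \<Rightarrow> rat \<Rightarrow> nat \<Rightarrow> rat" where
  "power_seq n u v m = u ^ m * v ^ (n - m)"

lemma power_seq_add:
  assumes "m1 \<le> w1" "m2 \<le> w2"
  shows "power_seq (w1 + w2) u v (m1 + m2) = power_seq w1 u v m1 * power_seq w2 u v m2"
proof -
  have "w1 + w2 - (m1 + m2) = (w1 - m1) + (w2 - m2)"
    using assms by simp
  then show ?thesis
    by (simp add: power_seq_def power_add mult_ac)
qed

lemma binomial_poly_power_seq: "binomial_poly n (power_seq n u v) = [:u, -v:] ^ n"
proof (rule poly_eqI)
  fix k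
  have "degree ([:u, -v:] ^ n) \<le> degree [:u, -v:] * n"
    by (rule degree_power_le)
  also have "\<dots> \<le> n"
    by simp
  finally have "degree ([:u, -v:] ^ n) \<le> n" .
  then show "coeff (binomial_poly n (power_seq n u v)) k = coeff ([:u, -v:] ^ n) k"
    by (cases "k \<le> n")
       (simp_all add: coeff_binomial_poly coeff_linear_poly_power power_seq_def coeff_eq_0
          power_minus[of v])
qed

lemma polarization_power_seq:
  "polarization w1 w2 (power_seq (w1 + w2) u v) = [:[:u, -v:] ^ w1:] * poly_X2 ([:u, -v:] ^ w2)"
proof -
  have "[:[:u, -v:] ^ w1:] * poly_X2 ([:u, -v:] ^ w2) =
      (\<Sum>m2\<le>w2. \<Sum>m1\<le>w1.
         [:smult (of_nat (w1 choose m1) * power_seq w1 u v m1) ([:0, -1:] ^ (w1 - m1)):] *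
         smult [:of_nat (w2 choose m2) * power_seq w2 u v m2:] ([:0, -1:] ^ (w2 - m2)))"
    unfolding binomial_poly_power_seq[of w1 u v, symmetric] binomial_poly_power_seq[of w2 u v, symmetric]
      binomial_poly_def sum_to_poly[symmetric]
      poly_X2_sum poly_X2_smult poly_X2_power poly_X2_minus_X sum_distrib_left sum_distrib_right ..
  also have "\<dots> = polarization w1 w2 (power_seq (w1 + w2) u v)"
    unfolding polarization_def sum.swap[of _ "{..w2}"]
    by (intro sum.cong refl) (simp add: power_seq_add mult_ac)
  finally show ?thesis ..
qed

lemma act1_binomial_poly_power_seq:
  "act1 n (a, b, c, d) (binomial_poly n (power_seq n u v)) =
     binomial_poly n (power_seq n (u * of_int a + v * of_int b) (u * of_int c + v * of_int d))"
  unfolding binomial_poly_power_seq act1_linear_power_mat2 ..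

lemma act2_polarization_power_seq:
  "act2 w1 w2 (a, b, c, d) (a, b, c, d) (polarization w1 w2 (power_seq (w1 + w2) u v)) =
     polarization w1 w2 (power_seq (w1 + w2) (u * of_int a + v * of_int b) (u * of_int c + v * of_int d))"
  unfolding polarization_power_seq act2_tensor act1_linear_power_mat2 ..

lemma linear_maps_eq_if_eq_on_power_seqs:
  fixes L M :: "(nat \<Rightarrow> rat) \<Rightarrow> rat poly poly"
  assumes L: "\<And>a. L a = (\<Sum>k\<le>n. smult [:a k:] (L (\<lambda>m. of_bool (m = k))))"
    and M: "\<And>a. M a = (\<Sum>k\<le>n. smult [:a k:] (M (\<lambda>m. of_bool (m = k))))"
    and eq: "\<And>t. L (power_seq n t 1) = M (power_seq n t 1)"
  shows "L a = M a"
proof -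
  define D where "D k = L (\<lambda>m. of_bool (m = k)) - M (\<lambda>m. of_bool (m = k))" for k
  have combination: "L b - M b = (\<Sum>k\<le>n. smult [:b k:] (D k))" for b
    unfolding L[of b] M[of b] D_def by (simp add: smult_diff_right sum_subtractf)
  have "(\<Sum>k\<le>n. coeff (coeff (D k) j) i * t ^ k) =
      coeff (coeff (L (power_seq n t 1) - M (power_seq n t 1)) j) i" for t i j
    unfolding combination by (simp add: power_seq_def coeff_sum mult.commute)
  then have "(\<Sum>k\<le>n. coeff (coeff (D k) j) i * t ^ k) = 0" for t i j
    by (simp add: eq)
  then have "coeff (coeff (D k) j) i = 0" if "k \<le> n" for k i j
    by (rule coeffs_eq_0_if_power_sums_eq_0[of "\<lambda>k. coeff (coeff (D k) j) i", OF _ that])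
  then have "D k = 0" if "k \<le> n" for k
    using that by (intro poly_eqI) simp
  then show ?thesis
    using combination[of a] by simp
qed

lemma act2_polarization:
  "act2 w1 w2 g g (polarization w1 w2 a) =
     polarization w1 w2 (binomial_coords (w1 + w2) (act1 (w1 + w2) g (binomial_poly (w1 + w2) a)))"
proof -
  define n where "n = w1 + w2"
  obtain ga gb gc gd where g: "g = (ga, gb, gc, gd)"
    by (cases g) auto
  let ?L = "\<lambda>a. act2 w1 w2 g g (polarization w1 w2 a)"
  let ?M = "\<lambda>a. polarization w1 w2 (binomial_coords n (act1 n g (binomial_poly n a)))"
  have "?L a = ?M a"
  proof (rule linear_maps_eq_if_eq_on_power_seqs[where L = ?L and M = ?M])
    show "?L a = (\<Sum>k\<le>n. smult [:a k:] (?L (\<lambda>m. of_bool (m = k))))" for a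
      unfolding n_def by (subst polarization_eq_sum_unit_seqs) (simp add: act2_sum act2_smult)
    show "?M a = (\<Sum>k\<le>n. smult [:a k:] (?M (\<lambda>m. of_bool (m = k))))" for a
      by (subst binomial_poly_eq_sum_unit_seqs)
         (simp add: act1_sum act1_smult binomial_coords_linear polarization_linear)
    show "?L (power_seq n t 1) = ?M (power_seq n t 1)" for t
      unfolding g n_def act2_polarization_power_seq act1_binomial_poly_power_seq
      by (intro polarization_cong) (simp add: binomial_coords_binomial_poly)
  qed
  then show ?thesis
    unfolding n_def .
qed

lemma diag_tensor: "diag ([:F:] * poly_X2 G) = F * G"
  by (simp add: diag_def poly_poly_X2_X)

lemma diag_polarization: "diag (polarization w1 w2 a) = binomial_poly (w1 + w2) a"
proof -
  let ?L = "\<lambda>a. [:diag (polarization w1 w2 a):]"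
  let ?M = "\<lambda>a. [:binomial_poly (w1 + w2) a:]"
  have "?L a = ?M a"
  proof (rule linear_maps_eq_if_eq_on_power_seqs[where L = ?L and M = ?M])
    show "?L a = (\<Sum>k\<le>w1 + w2. smult [:a k:] (?L (\<lambda>m. of_bool (m = k))))" for a
      by (subst polarization_eq_sum_unit_seqs) (simp add: diag_def poly_sum sum_to_poly)
    show "?M a = (\<Sum>k\<le>w1 + w2. smult [:a k:] (?M (\<lambda>m. of_bool (m = k))))" for a
      by (subst binomial_poly_eq_sum_unit_seqs) (simp add: sum_to_poly)
    show "?L (power_seq (w1 + w2) t 1) = ?M (power_seq (w1 + w2) t 1)" for t
      unfolding polarization_power_seq diag_tensor binomial_poly_power_seq by (simp add: power_add)
  qed
  then show ?thesis
    by simp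
qed

lemma diag_as_sum_monoms:
  assumes "Q \<in> V2 w1 w2"
  shows "diag Q = (\<Sum>j\<le>w2. \<Sum>i\<le>w1. monom (coeff (coeff Q j) i) (i + j))"
proof -
  from assms have dQ: "degree Q \<le> w2" and dc: "\<And>j. degree (coeff Q j) \<le> w1"
    by (auto simp: V2_def)
  have "diag Q = poly (\<Sum>j\<le>w2. monom (coeff Q j) j) [:0, 1:]"
    unfolding diag_def poly_as_sum_of_monoms'[OF dQ] ..
  also have "\<dots> = (\<Sum>j\<le>w2. (\<Sum>i\<le>w1. monom (coeff (coeff Q j) i) i) * monom 1 j)"
    unfolding poly_sum poly_as_sum_of_monoms'[OF dc] by (simp add: poly_monom linear_monom_power)
  also have "\<dots> = (\<Sum>j\<le>w2. \<Sum>i\<le>w1. monom (coeff (coeff Q j) i) (i + j))"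
    by (simp add: sum_distrib_right mult_monom)
  finally show ?thesis .
qed

lemma degree_diag_le: "Q \<in> V2 w1 w2 \<Longrightarrow> degree (diag Q) \<le> w1 + w2"
  unfolding diag_as_sum_monoms by (intro degree_sum_le) (auto intro: order.trans[OF degree_monom_le])

lemma diag_act2:
  assumes "Q \<in> V2 w1 w2"
  shows "diag (act2 w1 w2 g g Q) = act1 (w1 + w2) g (diag Q)"
proof -
  have "diag (act2 w1 w2 g g Q) = (\<Sum>j\<le>w2. \<Sum>i\<le>w1.
      smult (coeff (coeff Q j) i) (numer g ^ i * denom g ^ (w1 - i)) * (numer g ^ j * denom g ^ (w2 - j)))"
    unfolding act2_def diag_def poly_sum by (simp add: poly_poly_X2_X)
  also have "\<dots> = (\<Sum>j\<le>w2. \<Sum>i\<le>w1. act1 (w1 + w2) g (monom (coeff (coeff Q j) i) (i + j)))"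
  proof (intro sum.cong refl)
    fix i j assume "i \<in> {..w1}" "j \<in> {..w2}"
    then have "act1 (w1 + w2) g (monom (coeff (coeff Q j) i) (i + j)) =
        smult (coeff (coeff Q j) i) (numer g ^ (i + j) * denom g ^ ((w1 - i) + (w2 - j)))"
      by (simp add: act1_monom)
    then show "smult (coeff (coeff Q j) i) (numer g ^ i * denom g ^ (w1 - i)) *
        (numer g ^ j * denom g ^ (w2 - j)) = act1 (w1 + w2) g (monom (coeff (coeff Q j) i) (i + j))"
      unfolding power_add mult_smult_left by (simp only: mult_ac)
  qed
  also have "\<dots> = act1 (w1 + w2) g (diag Q)"
    unfolding diag_as_sum_monoms[OF assms] act1_sum ..
  finally show ?thesis .
qed

lemma degree_le_if_in_W1: "P \<in> W1 n \<Longrightarrow> degree P \<le> n"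
  by (simp add: W1_def V1_def)

definition polarize :: "nat \<Rightarrow> nat \<Rightarrow> rat poly \<Rightarrow> rat poly poly" where
  "polarize w1 w2 P = polarization w1 w2 (binomial_coords (w1 + w2) P)"

lemma polarize_binomial_poly: "polarize w1 w2 (binomial_poly (w1 + w2) a) = polarization w1 w2 a"
  unfolding polarize_def by (intro polarization_cong) (simp add: binomial_coords_binomial_poly)

lemma polarize_add: "polarize w1 w2 (P + Q) = polarize w1 w2 P + polarize w1 w2 Q"
  unfolding polarize_def polarization_def binomial_coords_add
  by (simp add: distrib_left smult_add_left distrib_right sum.distrib)

lemma polarize_0 [simp]: "polarize w1 w2 0 = 0"
  by (simp add: polarize_def polarization_def binomial_coords_def)

lemma act2_polarize:
  assumes "degree P \<le> w1 + w2"
  shows "act2 w1 w2 g g (polarize w1 w2 P) = polarize w1 w2 (act1 (w1 + w2) g P)"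
  unfolding polarize_def act2_polarization binomial_poly_binomial_coords[OF assms] ..

lemma diag_polarize: "degree P \<le> w1 + w2 \<Longrightarrow> diag (polarize w1 w2 P) = P"
  unfolding polarize_def diag_polarization by (rule binomial_poly_binomial_coords)

lemma polarize_in_V2_ID:
  assumes "P \<in> W1 (w1 + w2)"
  shows "polarize w1 w2 P \<in> V2_ID w1 w2"
proof -
  have deg: "degree P \<le> w1 + w2"
    using assms by (rule degree_le_if_in_W1)
  have S: "P + act1 (w1 + w2) S_mat P = 0"
    and U: "P + act1 (w1 + w2) U_mat P + act1 (w1 + w2) U2_mat P = 0"
    using assms by (auto simp: W1_def)
  have "polarization w1 w2 (binomial_coords (w1 + w2) P) \<in> V2 w1 w2"
    by (rule polarization_in_V2)
  moreover have "polarize w1 w2 P + act2 w1 w2 S_mat S_mat (polarize w1 w2 P) = 0"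
    using S by (simp add: act2_polarize[OF deg] flip: polarize_add)
  moreover have "polarize w1 w2 P + act2 w1 w2 U_mat U_mat (polarize w1 w2 P)
      + act2 w1 w2 U2_mat U2_mat (polarize w1 w2 P) = 0"
    using U by (simp add: act2_polarize[OF deg] flip: polarize_add)
  ultimately show ?thesis
    by (simp add: V2_ID_def polarize_def)
qed

lemma diag_in_W1:
  assumes "Q \<in> V2_ID w1 w2"
  shows "diag Q \<in> W1 (w1 + w2)"
proof -
  have V: "Q \<in> V2 w1 w2"
    and S: "Q + act2 w1 w2 S_mat S_mat Q = 0"
    and U: "Q + act2 w1 w2 U_mat U_mat Q + act2 w1 w2 U2_mat U2_mat Q = 0"
    using assms by (auto simp: V2_ID_def)
  have diag_add: "diag (A + B) = diag A + diag B" and diag_0: "diag 0 = 0" for A B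
    by (simp_all add: diag_def)
  have "diag Q + act1 (w1 + w2) S_mat (diag Q) = 0"
    using arg_cong[OF S, of diag] by (simp add: diag_add diag_0 diag_act2[OF V])
  moreover have "diag Q + act1 (w1 + w2) U_mat (diag Q) + act1 (w1 + w2) U2_mat (diag Q) = 0"
    using arg_cong[OF U, of diag] by (simp add: diag_add diag_0 diag_act2[OF V])
  ultimately show ?thesis
    using degree_diag_le[OF V] by (simp add: W1_def V1_def)
qed

theorem mainTheorem7:
  fixes w1 w2 :: nat
  assumes "even w1" "even w2" "w1 \<ge> 2" "w2 \<ge> 2"
  shows "(\<forall>P \<in> V2_ID w1 w2. diag P \<in> W1 (w1 + w2))
    \<and> diag ` V2_ID w1 w2 = W1 (w1 + w2)
    \<and> (\<forall>(a :: nat \<Rightarrow> rat) P.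
          P = (\<Sum>m\<le>w1 + w2. smult (of_nat ((w1 + w2) choose m) * a m)
                                   ([:0, -1:] ^ (w1 + w2 - m)))
          \<and> P \<in> W1 (w1 + w2) \<longrightarrow>
          (let Q = (\<Sum>m1\<le>w1. \<Sum>m2\<le>w2.
                     [: smult (of_nat (w1 choose m1) * of_nat (w2 choose m2) * a (m1 + m2))
                              ([:0, -1:] ^ (w1 - m1)) :] * [:0, -1:] ^ (w2 - m2))
           in Q \<in> V2_ID w1 w2 \<and> diag Q = P))"
proof (intro conjI allI impI)
  show well_defined: "\<forall>Q \<in> V2_ID w1 w2. diag Q \<in> W1 (w1 + w2)"
    using diag_in_W1 by blast
  have "P \<in> diag ` V2_ID w1 w2" if "P \<in> W1 (w1 + w2)" for P
    using polarize_in_V2_ID[OF that] diag_polarize[OF degree_le_if_in_W1[OF that]]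
    by (metis image_eqI)
  with well_defined show "diag ` V2_ID w1 w2 = W1 (w1 + w2)"
    by blast
  fix a P
  assume "P = (\<Sum>m\<le>w1 + w2. smult (of_nat ((w1 + w2) choose m) * a m)
      ([:0, -1:] ^ (w1 + w2 - m))) \<and> P \<in> W1 (w1 + w2)"
  then have P: "P = binomial_poly (w1 + w2) a" "P \<in> W1 (w1 + w2)"
    by (auto simp flip: binomial_poly_def)
  then have "polarization w1 w2 a = polarize w1 w2 P"
    by (simp add: polarize_binomial_poly)
  with P show "let Q = (\<Sum>m1\<le>w1. \<Sum>m2\<le>w2.
      [: smult (of_nat (w1 choose m1) * of_nat (w2 choose m2) * a (m1 + m2))
               ([:0, -1:] ^ (w1 - m1)) :] * [:0, -1:] ^ (w2 - m2))
    in Q \<in> V2_ID w1 w2 \<and> diag Q = P"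
    unfolding Let_def polarization_def[symmetric]
    by (simp add: polarize_in_V2_ID diag_polarize degree_le_if_in_W1)
qed

end
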